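(* Let $\mathbf{F}$ be a field of characteristic $2$, $m\ge1$, and $A,B\in\{0,1\}^m$ with $|A|,|B|\ge2$. The following elements of $Q$ lie in $\ker(\pi)$. (a) If $A\cap B=\emptyset$, let $j\in B$ and $B'=B-\Delta_j$. Then $$\mathrm{Tr}(A)\mathrm{Tr}(B)+\mathrm{Tr}(A+\Delta_j)\mathrm{Tr}(B')+x_j\mathrm{Tr}(A+B')+x_j\mathrm{Tr}(A)\mathrm{Tr}(B')\in\ker(\pi).$$ (b) If $|A\cap B|\ge1$ and $B\le A$, let $i\in A\cap B$, $B'=B-\Delta_i$, $A'=A-\Delta_i$, and $J=A\setminus B$. Then $$\mathrm{Tr}(A)\mathrm{Tr}(B)+x_i\mathrm{Tr}(A)\mathrm{Tr}(B')+N_i\mathrm{Tr}(A')\mathrm{Tr}(B')+x_iN^{B'}\mathrm{Tr}(J+\Delta_i)\in\ker(\pi).$$ (c) If $|A\cap B|\ge1$, $A\not\le B$ and $B\not\le A$, put $I=A\cap B$, $J=A\setminus B$, $K=B\setminus A$. Then $$\mathrm{Tr}(A)\mathrm{Tr}(B)+\mathrm{Tr}(I+J+K)\mathrm{Tr}(I)+N^I\mathrm{Tr}(J)\mathrm{Tr}(K)\in\ker(\pi).$$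
   Context: Let $S=\mathbf{F}[x_1,y_1,\dots,x_m,y_m]$ with the $\mathbf{F}$-algebra automorphism $\sigma(x_i)=x_i$, $\sigma(y_i)=y_i+x_i$ of order 2, and let $S^{C_2}$ be the ring of $\sigma$-invariants. For $A=(a_1,\dots,a_m)\in\mathbb{N}^m$ write $x^A=\prod_s x_s^{a_s}$, $y^A=\prod_s y_s^{a_s}$, $N^A=\prod_s N_s^{a_s}$ where $N_s=y_s^2+x_sy_s$, $|A|=\sum_s a_s$. $A\le B$ means componentwise $\le$; sums/differences of sequences are componentwise. Elements of $\{0,1\}^m$ are identified with subsets of $\{1,\dots,m\}$; $\cap,\setminus$ are set operations and $i\in A$ means $a_i=1$. $\Delta_s$ has $1$ in position $s$ and $0$ elsewhere. For $A\in\{0,1\}^m$, $\mathrm{tr}(A)=y^A+\prod_s(y_s+x_s)^{a_s}$. Let $R=\mathbf{F}[x_1,\dots,x_m,N_1,\dots,N_m]$ (polynomial ring in $2m$ indeterminates), $Q=R[\mathrm{Tr}(A):A\in\{0,1\}^m,|A|\ge2]$ (polynomial ring), and $\pi:Q\to S^{C_2}$ the $\mathbf{F}$-algebra homomorphism with $\pi(x_i)=x_i$, $\pi(N_i)=y_i^2+x_iy_i$, $\pi(\mathrm{Tr}(A))=\mathrm{tr}(A)$. Convention: for $C$ with $|C|\le1$, $\mathrm{Tr}(0)=0$ and $\mathrm{Tr}(\Delta_s)=x_s$ in $Q$. *)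

theory Defs
  imports "HOL-Library.Poly_Mapping"
begin

(* The polynomial ring S = F[x_1,y_1,...,x_m,y_m] is modelled as the ring
  (nat =>0 nat) =>0 'a of polynomials over 'a in the variables indexed by nat;
  x_i is variable 2i and y_i is variable 2i+1.*)

definition Xv :: "nat \<Rightarrow> ((nat \<Rightarrow>\<^sub>0 nat) \<Rightarrow>\<^sub>0 'a::comm_ring_1)" where
  "Xv i = Poly_Mapping.single (Poly_Mapping.single (2*i) 1) 1"

definition Yv :: "nat \<Rightarrow> ((nat \<Rightarrow>\<^sub>0 nat) \<Rightarrow>\<^sub>0 'a::comm_ring_1)" where
  "Yv i = Poly_Mapping.single (Poly_Mapping.single (2*i+1) 1) 1"

(* N_i = y_i^2 + x_i y_i (the image of the generator N_i under pi).*)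
definition Nv :: "nat \<Rightarrow> ((nat \<Rightarrow>\<^sub>0 nat) \<Rightarrow>\<^sub>0 'a::comm_ring_1)" where
  "Nv i = Yv i ^ 2 + Xv i * Yv i"

(* N^C for a 0/1 sequence C (identified with a subset of {1..m}).*)
definition NPow :: "nat set \<Rightarrow> ((nat \<Rightarrow>\<^sub>0 nat) \<Rightarrow>\<^sub>0 'a::comm_ring_1)" where
  "NPow C = (\<Prod>s\<in>C. Nv s)"

(* tr(C) = y^C + prod_s (y_s+x_s)^{c_s}, the image of Tr(C) under pi.  For |C| <= 1 this
  gives tr(0) = 0 (char 2) and tr(Delta_s) = x_s, matching the convention for Tr in Q.*)
definition tr :: "nat set \<Rightarrow> ((nat \<Rightarrow>\<^sub>0 nat) \<Rightarrow>\<^sub>0 'a::comm_ring_1)" where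
  "tr C = (\<Prod>s\<in>C. Yv s) + (\<Prod>s\<in>C. Yv s + Xv s)"

end

theory Submission
  imports Defs
begin

text \<open>Write \<open>tr C = y\<^sup>C + \<sigma>(y\<^sup>C)\<close> with \<open>\<sigma>(y\<^sup>C) = (y + x)\<^sup>C\<close> and \<open>N\<^sup>C = y\<^sup>C \<sigma>(y\<^sup>C)\<close>.
  Both monomials are multiplicative over disjoint unions, so after splitting \<open>A\<close> and \<open>B\<close>
  into the disjoint pieces \<open>A \<inter> B\<close>, \<open>A - B\<close>, \<open>B - A\<close> (and the distinguished index) each
  relation becomes a polynomial identity in a handful of commuting monomials whose
  left-hand side is twice some polynomial, hence vanishes in characteristic 2.
  Nothing about the particular variables is used, so the relations hold for arbitrary
  families \<open>y, x\<close> in any commutative ring with \<open>1 + 1 = 0\<close>; the bounds on \<open>|A|, |B|\<close>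
  and, for (c), the case distinction only matter for reading the relations in \<open>Q\<close>.\<close>

definition trace_monomial :: "('i \<Rightarrow> 'r::comm_ring_1) \<Rightarrow> ('i \<Rightarrow> 'r) \<Rightarrow> 'i set \<Rightarrow> 'r" where
  "trace_monomial y x C = (\<Prod>s\<in>C. y s) + (\<Prod>s\<in>C. y s + x s)"

definition norm_monomial :: "('i \<Rightarrow> 'r::comm_ring_1) \<Rightarrow> ('i \<Rightarrow> 'r) \<Rightarrow> 'i set \<Rightarrow> 'r" where
  "norm_monomial y x C = (\<Prod>s\<in>C. y s ^ 2 + x s * y s)"

lemma norm_monomial_eq_prod_mult:
  "norm_monomial y x C = (\<Prod>s\<in>C. y s) * (\<Prod>s\<in>C. y s + x s)"
  by (simp add: norm_monomial_def power2_eq_square algebra_simps flip: prod.distrib)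

context
  fixes y x :: "'i \<Rightarrow> 'r::comm_ring_1"
  assumes char2: "(1::'r) + 1 = 0"
begin

private abbreviation P :: "'i set \<Rightarrow> 'r" where "P C \<equiv> \<Prod>s\<in>C. y s"
private abbreviation Q :: "'i set \<Rightarrow> 'r" where "Q C \<equiv> \<Prod>s\<in>C. y s + x s"

lemma trace_monomial_disjoint_relation:
  assumes "finite A" "finite B" "A \<inter> B = {}" "j \<in> B"
  shows "trace_monomial y x A * trace_monomial y x B
      + trace_monomial y x (A \<union> {j}) * trace_monomial y x (B - {j})
      + x j * trace_monomial y x (A \<union> (B - {j}))
      + x j * trace_monomial y x A * trace_monomial y x (B - {j}) = 0"
proof -
  define B' where "B' = B - {j}"
  have B: "B = insert j B'" "j \<notin> B'" "finite B'" and "j \<notin> A" "A \<inter> B' = {}"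
    using assms by (auto simp: B'_def)
  then have "trace_monomial y x A * trace_monomial y x B
      + trace_monomial y x (A \<union> {j}) * trace_monomial y x B'
      + x j * trace_monomial y x (A \<union> B') + x j * trace_monomial y x A * trace_monomial y x B'
    = (P A + Q A) * (y j * P B' + (y j + x j) * Q B')
      + (y j * P A + (y j + x j) * Q A) * (P B' + Q B')
      + x j * (P A * P B' + Q A * Q B') + x j * (P A + Q A) * (P B' + Q B')"
    using \<open>finite A\<close> by (simp add: trace_monomial_def prod.union_disjoint)
  also have "\<dots> = (1 + 1) * (y j * P A * P B' + (y j + x j) * Q A * Q B'
      + (y j + x j) * (P A * Q B' + Q A * P B') + x j * (P A * P B' + Q A * Q B'))"
    by (simp add: algebra_simps)
  finally show ?thesis
    using char2 by (simp add: B'_def)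
qed

lemma trace_monomial_subset_relation:
  assumes "finite A" "B \<subseteq> A" "i \<in> B"
  shows "trace_monomial y x A * trace_monomial y x B
      + x i * trace_monomial y x A * trace_monomial y x (B - {i})
      + (y i ^ 2 + x i * y i) * trace_monomial y x (A - {i}) * trace_monomial y x (B - {i})
      + x i * norm_monomial y x (B - {i}) * trace_monomial y x ((A - B) \<union> {i}) = 0"
proof -
  define B' where "B' = B - {i}"
  define J where "J = A - B"
  have fin: "finite B'" "finite J"
    using assms finite_subset by (auto simp: B'_def J_def)
  have A: "A = insert i (J \<union> B')" "A - {i} = J \<union> B'" "i \<notin> J \<union> B'" "J \<inter> B' = {}"
    and B: "B = insert i B'" "i \<notin> B'" and "J \<union> {i} = insert i J" "i \<notin> J"
    using assms by (auto simp: B'_def J_def)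
  have "trace_monomial y x A * trace_monomial y x B
      + x i * trace_monomial y x A * trace_monomial y x B'
      + (y i ^ 2 + x i * y i) * trace_monomial y x (J \<union> B') * trace_monomial y x B'
      + x i * norm_monomial y x B' * trace_monomial y x (J \<union> {i})
    = (y i * (P J * P B') + (y i + x i) * (Q J * Q B')) * (y i * P B' + (y i + x i) * Q B')
      + x i * (y i * (P J * P B') + (y i + x i) * (Q J * Q B')) * (P B' + Q B')
      + (y i ^ 2 + x i * y i) * (P J * P B' + Q J * Q B') * (P B' + Q B')
      + x i * (P B' * Q B') * (y i * P J + (y i + x i) * Q J)"
    unfolding norm_monomial_eq_prod_mult trace_monomial_def
    by (subst (1 2) A(1)) (simp add: B A fin \<open>J \<union> {i} = insert i J\<close> \<open>i \<notin> J\<close> prod.union_disjoint)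
  also have "\<dots> = (1 + 1) * (P J * P B' * P B' * y i * (y i + x i)
      + Q J * Q B' * Q B' * (y i + x i) ^ 2
      + P J * P B' * Q B' * (y i * (y i + x i) + x i * y i)
      + Q J * P B' * Q B' * (y i * (y i + x i) + x i * (y i + x i)))"
    by (simp add: algebra_simps power2_eq_square)
  finally show ?thesis
    using char2 A(2) by (simp add: B'_def J_def)
qed

lemma trace_monomial_crossing_relation:
  assumes "finite A" "finite B"
  shows "trace_monomial y x A * trace_monomial y x B
      + trace_monomial y x ((A \<inter> B) \<union> (A - B) \<union> (B - A)) * trace_monomial y x (A \<inter> B)
      + norm_monomial y x (A \<inter> B) * trace_monomial y x (A - B) * trace_monomial y x (B - A) = 0"
proof -
  define I where "I = A \<inter> B"
  define J where "J = A - B"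
  define K where "K = B - A"
  have fin: "finite I" "finite J" "finite K"
    using assms by (auto simp: I_def J_def K_def)
  have disj: "I \<inter> J = {}" "I \<inter> K = {}" "(I \<union> J) \<inter> K = {}"
    and "A = I \<union> J" "B = I \<union> K"
    by (auto simp: I_def J_def K_def)
  then have "trace_monomial y x A * trace_monomial y x B
      + trace_monomial y x (I \<union> J \<union> K) * trace_monomial y x I
      + norm_monomial y x I * trace_monomial y x J * trace_monomial y x K
    = (P I * P J + Q I * Q J) * (P I * P K + Q I * Q K)
      + (P I * P J * P K + Q I * Q J * Q K) * (P I + Q I)
      + P I * Q I * (P J + Q J) * (P K + Q K)"
    using fin by (simp add: trace_monomial_def norm_monomial_eq_prod_mult prod.union_disjoint)
  also have "\<dots> = (1 + 1) * (P I * P I * P J * P K + Q I * Q I * Q J * Q K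
      + P I * Q I * (P J + Q J) * (P K + Q K))"
    by (simp add: algebra_simps)
  finally show ?thesis
    using char2 by (simp add: I_def J_def K_def)
qed

end

lemma tr_eq_trace_monomial: "tr = trace_monomial Yv Xv"
  by (simp add: fun_eq_iff tr_def trace_monomial_def)

lemma NPow_eq_norm_monomial: "NPow = norm_monomial Yv Xv"
  by (simp add: fun_eq_iff NPow_def Nv_def norm_monomial_def)

lemma char2_poly_mapping:
  assumes "(1::'a::comm_ring_1) + 1 = 0"
  shows "(1::('b \<Rightarrow>\<^sub>0 nat) \<Rightarrow>\<^sub>0 'a) + 1 = 0"
  using assms by (simp flip: single_add single_one)

theorem mainTheorem5:
  fixes m :: nat and A B :: "nat set"
  assumes char2: "(1::'a::field) + 1 = 0"
    and m: "m \<ge> 1"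
    and AB: "A \<subseteq> {1..m}" "B \<subseteq> {1..m}"
    and cA: "card A \<ge> 2" and cB: "card B \<ge> 2"
  shows
    "(A \<inter> B = {} \<longrightarrow> (\<forall>j\<in>B.
        (tr A * tr B + tr (A \<union> {j}) * tr (B - {j}) + Xv j * tr (A \<union> (B - {j}))
          + Xv j * tr A * tr (B - {j}) :: (nat \<Rightarrow>\<^sub>0 nat) \<Rightarrow>\<^sub>0 'a) = 0))
   \<and> (A \<inter> B \<noteq> {} \<and> B \<subseteq> A \<longrightarrow> (\<forall>i\<in>A \<inter> B.
        (tr A * tr B + Xv i * tr A * tr (B - {i}) + Nv i * tr (A - {i}) * tr (B - {i})
          + Xv i * NPow (B - {i}) * tr ((A - B) \<union> {i}) :: (nat \<Rightarrow>\<^sub>0 nat) \<Rightarrow>\<^sub>0 'a) = 0))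
   \<and> (A \<inter> B \<noteq> {} \<and> \<not> A \<subseteq> B \<and> \<not> B \<subseteq> A \<longrightarrow>
        (tr A * tr B + tr ((A \<inter> B) \<union> (A - B) \<union> (B - A)) * tr (A \<inter> B)
          + NPow (A \<inter> B) * tr (A - B) * tr (B - A) :: (nat \<Rightarrow>\<^sub>0 nat) \<Rightarrow>\<^sub>0 'a) = 0)"
proof -
  note char2_S = char2_poly_mapping[OF char2, where 'b = nat]
  have fin: "finite A" "finite B"
    using AB finite_subset by blast+
  show ?thesis
    unfolding tr_eq_trace_monomial NPow_eq_norm_monomial Nv_def
    using trace_monomial_disjoint_relation[OF char2_S fin]
      trace_monomial_subset_relation[OF char2_S fin(1)]
      trace_monomial_crossing_relation[OF char2_S fin]
    by blast
qed

end
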